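(* Let $q,r,\mu,\nu$ be positive integers. For all $z\in\mathbb{C}$, \[ \mathcal{M}(z)=(I_\mu\otimes U_q(z))\,\mathcal{A}\,(I_\nu\otimes W_r(z)), \] and $\mathcal{M}(z)$ and $\mathcal{A}$ have the same rank, equal to $\min\{\mu,r\}\cdot\min\{\nu,q\}$.
   Context: Matrix indices start at $0$. $u(z)=(1,z,\dots,z^{q-1})^\top$, $w(z)=(1,z,\dots,z^{r-1})$, $M(z)=u(z)w(z)\in\mathbb{C}^{q\times r}$, and $M^{(k)}$ denotes the $k$-th derivative in $z$. $\mathcal{M}(z)\in\mathbb{C}^{\mu q\times\nu r}$ is the block matrix with $(i,j)$ block $M^{(i+j)}(z)$, $i=0,\dots,\mu-1$, $j=0,\dots,\nu-1$. $U_q(z)=(u(z),u'(z),\dots,u^{(q-1)}(z))\in\mathbb{C}^{q\times q}$ and $W_r(z)\in\mathbb{C}^{r\times r}$ is the matrix whose $i$-th row is $w^{(i)}(z)$, $i=0,\dots,r-1$. $\mathcal{A}\in\mathbb{R}^{\mu q\times\nu r}$ is the block matrix with $(i,j)$ block $A^{i+j}$, where $A^k\in\mathbb{R}^{q\times r}$ has entries $A^k_{ab}=\binom{k}{a}$ if $a+b=k$ and $0$ otherwise. *)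

theory Defs
  imports "HOL-Analysis.Analysis" "Jordan_Normal_Form.DL_Rank"
begin

definition dmon :: "nat \<Rightarrow> nat \<Rightarrow> complex \<Rightarrow> complex" where
  "dmon k n z = (deriv ^^ k) (\<lambda>w. w ^ n) z"

definition kron :: "'a::times mat \<Rightarrow> 'a mat \<Rightarrow> 'a mat" where
  "kron A B = mat (dim_row A * dim_row B) (dim_col A * dim_col B)
     (\<lambda>(i,j). A $$ (i div dim_row B, j div dim_col B) * B $$ (i mod dim_row B, j mod dim_col B))"

definition hankel_blocks :: "nat \<Rightarrow> nat \<Rightarrow> nat \<Rightarrow> nat \<Rightarrow> (nat \<Rightarrow> 'a mat) \<Rightarrow> 'a mat" where
  "hankel_blocks q r \<mu> \<nu> F = mat (\<mu> * q) (\<nu> * r)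
     (\<lambda>(i,j). F (i div q + j div r) $$ (i mod q, j mod r))"

(* M^{(k)}(z), where M(z) = u(z) w(z) has entries z^(a+b) *)
definition Mder :: "nat \<Rightarrow> nat \<Rightarrow> nat \<Rightarrow> complex \<Rightarrow> complex mat" where
  "Mder q r k z = mat q r (\<lambda>(a,b). dmon k (a + b) z)"

definition MM :: "nat \<Rightarrow> nat \<Rightarrow> nat \<Rightarrow> nat \<Rightarrow> complex \<Rightarrow> complex mat" where
  "MM q r \<mu> \<nu> z = hankel_blocks q r \<mu> \<nu> (\<lambda>k. Mder q r k z)"

(* U_q(z) = (u(z), u'(z), ..., u^{(q-1)}(z)) : column j is u^{(j)}(z) *)
definition Uq :: "nat \<Rightarrow> complex \<Rightarrow> complex mat" where
  "Uq q z = mat q q (\<lambda>(a,j). dmon j a z)"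

(* W_r(z) : row i is w^{(i)}(z) *)
definition Wr :: "nat \<Rightarrow> complex \<Rightarrow> complex mat" where
  "Wr r z = mat r r (\<lambda>(i,b). dmon i b z)"

definition Ak :: "nat \<Rightarrow> nat \<Rightarrow> nat \<Rightarrow> real mat" where
  "Ak q r k = mat q r (\<lambda>(a,b). if a + b = k then real (k choose a) else 0)"

definition AA :: "nat \<Rightarrow> nat \<Rightarrow> nat \<Rightarrow> nat \<Rightarrow> real mat" where
  "AA q r \<mu> \<nu> = hankel_blocks q r \<mu> \<nu> (Ak q r)"

end

theory Submission
  imports Defs "Jordan_Normal_Form.DL_Rank_Submatrix"
begin

text \<open>Let \<open>D k n z = k! (n choose k) z^(n - k)\<close> be the \<open>k\<close>-th derivative of \<open>w^n\<close> at \<open>z\<close>, so that the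
  entry of \<open>\<M>(z)\<close> at position \<open>(a, b)\<close> of block \<open>(i, j)\<close> is \<open>D (i + j) (a + b) z\<close>. The factorization
  is the Leibniz rule \<open>D K (a + b) = \<Sum>c. (K choose c) D c a D (K - c) b\<close>, read blockwise as
  \<open>M^(K) = U_q A^K W_r\<close>.

  For the rank, \<open>\<M>(z)\<close> and \<open>\<A>\<close> (at \<open>z = 0\<close>, rescaled by \<open>1/a!\<close> and \<open>1/b!\<close>) are both diagonal
  rescalings of \<open>(D (i + j) (a + b) z)\<close>. Applying the Leibniz rule twice gives
  \<open>D (i + j) (a + b) = \<Sum>s u. (i choose u) D (s + i - u) a \<cdot> (j choose s) D (u + j - s) b\<close>, where
  only \<open>s < q\<close> and \<open>u < r\<close> contribute because derivatives beyond the degree vanish; this factors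
  the matrix through \<open>min \<nu> q \<cdot> min \<mu> r\<close> inner indices. Conversely, on the rows with
  \<open>i < min \<mu> r\<close>, \<open>a < min \<nu> q\<close> and the columns with \<open>j < min \<nu> q\<close>, \<open>b < min \<mu> r\<close>, both factors
  are square and triangular up to a reordering, with pivots \<open>s!\<close> and \<open>u!\<close>, so this minor is
  nonsingular.\<close>

definition monomial_deriv :: "nat \<Rightarrow> nat \<Rightarrow> 'a::comm_semiring_1 \<Rightarrow> 'a" where
  "monomial_deriv k n z = of_nat (fact k * (n choose k)) * z ^ (n - k)"

lemma fact_Suc_mult_choose_Suc:
  "fact (Suc k) * (n choose Suc k) = fact k * (n choose k) * (n - k)"
proof -
  have absorb: "Suc k * (n choose Suc k) = (n - k) * (n choose k)"
    using binomial_absorption[of k n] binomial_absorb_comp[of n k] by simp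
  have "fact (Suc k) * (n choose Suc k) = fact k * (Suc k * (n choose Suc k))"
    by (simp add: fact_Suc algebra_simps)
  also have "\<dots> = fact k * ((n - k) * (n choose k))"
    using absorb by simp
  finally show ?thesis
    by (simp add: mult_ac)
qed

lemma higher_deriv_power:
  "(deriv ^^ k) (\<lambda>w::'a::real_normed_field. w ^ n) = monomial_deriv k n"
proof (induction k)
  case 0
  then show ?case by (simp add: monomial_deriv_def fun_eq_iff)
next
  case (Suc k)
  have "deriv (monomial_deriv k n) w = monomial_deriv (Suc k) n w" for w :: 'a
  proof -
    have "(monomial_deriv k n has_field_derivative
        of_nat (fact k * (n choose k)) * (of_nat (n - k) * w ^ (n - k - 1))) (at w)"
      unfolding monomial_deriv_def by (auto intro!: derivative_eq_intros)
    then have "deriv (monomial_deriv k n) w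
        = of_nat (fact k * (n choose k)) * (of_nat (n - k) * w ^ (n - k - 1))"
      by (rule DERIV_imp_deriv)
    also have "\<dots> = monomial_deriv (Suc k) n w"
      unfolding monomial_deriv_def fact_Suc_mult_choose_Suc of_nat_mult by (simp add: mult_ac)
    finally show ?thesis .
  qed
  then show ?case
    by (simp add: Suc.IH fun_eq_iff)
qed

lemma dmon_eq_monomial_deriv: "dmon k n z = monomial_deriv k n z"
  unfolding dmon_def higher_deriv_power ..

lemma monomial_deriv_eq_0: "n < k \<Longrightarrow> monomial_deriv k n z = 0"
  by (simp add: monomial_deriv_def binomial_eq_0)

lemma monomial_deriv_nonzero_imp_le: "monomial_deriv k n z \<noteq> 0 \<Longrightarrow> k \<le> n"
  using monomial_deriv_eq_0 not_le by blast

lemma monomial_deriv_self: "monomial_deriv n n z = of_nat (fact n)"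
  by (simp add: monomial_deriv_def)

lemma monomial_deriv_mult:
  fixes z :: "'a::comm_semiring_1"
  shows "monomial_deriv k (a + b) z
    = (\<Sum>c\<le>k. of_nat (k choose c) * monomial_deriv c a z * monomial_deriv (k - c) b z)"
proof -
  have summand: "of_nat (k choose c) * monomial_deriv c a z * monomial_deriv (k - c) b z
      = of_nat (fact k * ((a choose c) * (b choose (k - c)))) * z ^ (a + b - k)" if "c \<le> k" for c
  proof (cases "c \<le> a \<and> k - c \<le> b")
    case True
    have exponent: "a - c + (b - (k - c)) = a + b - k"
      using True that by arith
    have coefficient: "(k choose c) * (fact c * (a choose c)) * (fact (k - c) * (b choose (k - c)))
        = fact k * ((a choose c) * (b choose (k - c)))"
      using binomial_fact_lemma[OF that] by (simp add: algebra_simps)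
    have "of_nat (k choose c) * monomial_deriv c a z * monomial_deriv (k - c) b z
        = of_nat ((k choose c) * (fact c * (a choose c)) * (fact (k - c) * (b choose (k - c))))
          * (z ^ (a - c) * z ^ (b - (k - c)))"
      unfolding monomial_deriv_def by (simp add: algebra_simps)
    then show ?thesis
      unfolding coefficient power_add[symmetric] exponent .
  next
    case False
    then show ?thesis
      by (auto simp: monomial_deriv_def binomial_eq_0)
  qed
  have "(\<Sum>c\<le>k. of_nat (k choose c) * monomial_deriv c a z * monomial_deriv (k - c) b z)
      = of_nat (fact k * (\<Sum>c\<le>k. (a choose c) * (b choose (k - c)))) * z ^ (a + b - k)"
    by (simp add: summand sum_distrib_left sum_distrib_right of_nat_sum)
  then show ?thesis
    unfolding vandermonde monomial_deriv_def by simp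
qed

lemma fact_choose_mult_fact_choose:
  "fact y * (a choose y) * (fact x * (a - y choose x)) = fact (x + y) * (a choose (x + y))"
proof (cases "x + y \<le> a")
  case True
  have "fact y * (a choose y) * (fact x * (a - y choose x))
      = fact y * fact x * ((a choose y) * (a - y choose x))"
    by (simp add: mult_ac)
  also have "(a choose y) * (a - y choose x) = (a choose (x + y)) * (x + y choose y)"
    using choose_mult[of y "x + y" a] True by simp
  also have "fact y * fact x * ((a choose (x + y)) * (x + y choose y))
      = fact y * fact (x + y - y) * (x + y choose y) * (a choose (x + y))"
    by (simp add: mult_ac)
  also have "\<dots> = fact (x + y) * (a choose (x + y))"
    by (subst binomial_fact_lemma) simp_all
  finally show ?thesis .
next
  case False
  then have "a choose (x + y) = 0"
    by (simp add: binomial_eq_0)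
  moreover have "(a choose y) = 0 \<or> (a - y choose x) = 0"
    using False by (cases "y \<le> a") (simp_all add: binomial_eq_0)
  ultimately show ?thesis
    by (elim disjE) (simp_all del: binomial_eq_0_iff)
qed

lemma monomial_deriv_iterate:
  "of_nat (fact y * (a choose y)) * monomial_deriv x (a - y) z = monomial_deriv (x + y) a z"
  unfolding monomial_deriv_def fact_choose_mult_fact_choose[symmetric]
  by (simp add: algebra_simps diff_diff_eq)

lemma monomial_deriv_mult_partial:
  fixes z :: "'a::comm_semiring_1"
  assumes "u \<le> i"
  shows "(\<Sum>s\<le>j. (of_nat (i choose u) * monomial_deriv (s + (i - u)) a z)
            * (of_nat (j choose s) * monomial_deriv (u + (j - s)) b z))
       = of_nat (fact i * ((a choose (i - u)) * (b choose u))) * monomial_deriv j (a + b - i) z"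
proof -
  define c where "c = (i choose u) * fact (i - u) * fact u * ((a choose (i - u)) * (b choose u))"
  have "(\<Sum>s\<le>j. (of_nat (i choose u) * monomial_deriv (s + (i - u)) a z)
            * (of_nat (j choose s) * monomial_deriv (u + (j - s)) b z))
      = of_nat c * (\<Sum>s\<le>j. of_nat (j choose s) * monomial_deriv s (a - (i - u)) z
                                               * monomial_deriv (j - s) (b - u) z)"
  proof -
    have "(of_nat (i choose u) * monomial_deriv (s + (i - u)) a z)
          * (of_nat (j choose s) * monomial_deriv (u + (j - s)) b z)
        = of_nat c * (of_nat (j choose s) * monomial_deriv s (a - (i - u)) z
                                          * monomial_deriv (j - s) (b - u) z)" for s
      unfolding c_def monomial_deriv_iterate[of "i - u" a s z, symmetric]
        monomial_deriv_iterate[of u b "j - s" z, unfolded add.commute[of "j - s"], symmetric]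
      by (simp add: mult_ac)
    then show ?thesis
      by (simp only: sum_distrib_left)
  qed
  also have "\<dots> = of_nat c * monomial_deriv j (a - (i - u) + (b - u)) z"
    by (simp add: monomial_deriv_mult)
  also have "\<dots> = of_nat (fact i * ((a choose (i - u)) * (b choose u))) * monomial_deriv j (a + b - i) z"
  proof (cases "i - u \<le> a \<and> u \<le> b")
    case True
    have "a - (i - u) + (b - u) = a + b - i"
      using True assms by arith
    moreover have "(i choose u) * fact (i - u) * fact u = fact i"
      using binomial_fact_lemma[OF assms] by (simp add: algebra_simps)
    ultimately show ?thesis
      by (simp add: c_def)
  next
    case False
    then show ?thesis
      by (auto simp: c_def binomial_eq_0)
  qed
  finally show ?thesis .
qed

lemma monomial_deriv_mult_twice:
  fixes z :: "'a::comm_semiring_1"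
  shows "monomial_deriv (i + j) (a + b) z
    = (\<Sum>u\<le>i. \<Sum>s\<le>j. (of_nat (i choose u) * monomial_deriv (s + (i - u)) a z)
                        * (of_nat (j choose s) * monomial_deriv (u + (j - s)) b z))"
proof -
  have "(\<Sum>u\<le>i. \<Sum>s\<le>j. (of_nat (i choose u) * monomial_deriv (s + (i - u)) a z)
                        * (of_nat (j choose s) * monomial_deriv (u + (j - s)) b z))
      = of_nat (fact i * (\<Sum>u\<le>i. (b choose u) * (a choose (i - u)))) * monomial_deriv j (a + b - i) z"
  proof -
    have "(\<Sum>u\<le>i. \<Sum>s\<le>j. (of_nat (i choose u) * monomial_deriv (s + (i - u)) a z)
                          * (of_nat (j choose s) * monomial_deriv (u + (j - s)) b z))
        = (\<Sum>u\<le>i. of_nat (fact i * ((a choose (i - u)) * (b choose u))) * monomial_deriv j (a + b - i) z)"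
      by (intro sum.cong refl monomial_deriv_mult_partial) simp
    then show ?thesis
      by (simp add: sum_distrib_left sum_distrib_right of_nat_sum algebra_simps)
  qed
  also have "\<dots> = monomial_deriv (j + i) (a + b) z"
    using monomial_deriv_iterate[of i "a + b" j z] by (simp add: vandermonde add.commute)
  finally show ?thesis
    by (simp add: add.commute)
qed

definition left_factor :: "'a \<Rightarrow> nat \<Rightarrow> nat \<Rightarrow> nat \<Rightarrow> nat \<Rightarrow> 'a::comm_semiring_1" where
  "left_factor z i a s u =
     (if u \<le> i then of_nat (i choose u) * monomial_deriv (s + (i - u)) a z else 0)"

definition right_factor :: "'a \<Rightarrow> nat \<Rightarrow> nat \<Rightarrow> nat \<Rightarrow> nat \<Rightarrow> 'a::comm_semiring_1" where
  "right_factor z s u j b =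
     (if s \<le> j then of_nat (j choose s) * monomial_deriv (u + (j - s)) b z else 0)"

lemma monomial_deriv_eq_sum_factors:
  fixes z :: "'a::comm_semiring_1"
  assumes i: "i < \<mu>" and a: "a < q" and j: "j < \<nu>" and b: "b < r"
  shows "monomial_deriv (i + j) (a + b) z
    = (\<Sum>s<min \<nu> q. \<Sum>u<min \<mu> r. left_factor z i a s u * right_factor z s u j b)"
proof -
  let ?f = "\<lambda>s u. left_factor z i a s u * right_factor z s u j b"
  have "monomial_deriv (i + j) (a + b) z = (\<Sum>u\<le>i. \<Sum>s<\<nu>. ?f s u)"
    unfolding monomial_deriv_mult_twice
  proof (rule sum.cong[OF refl])
    fix u assume "u \<in> {..i}"
    then show "(\<Sum>s\<le>j. (of_nat (i choose u) * monomial_deriv (s + (i - u)) a z)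
                  * (of_nat (j choose s) * monomial_deriv (u + (j - s)) b z))
        = (\<Sum>s<\<nu>. ?f s u)"
      by (intro sum.mono_neutral_cong_left) (use j in \<open>auto simp: left_factor_def right_factor_def\<close>)
  qed
  also have "\<dots> = (\<Sum>u<\<mu>. \<Sum>s<\<nu>. ?f s u)"
    by (rule sum.mono_neutral_left) (use i in \<open>auto simp: left_factor_def\<close>)
  also have "\<dots> = (\<Sum>u<min \<mu> r. \<Sum>s<\<nu>. ?f s u)"
    \<comment> \<open>this truncation and the next one are where the minima in the rank come from\<close>
  proof (rule sum.mono_neutral_right)
    show "\<forall>u\<in>{..<\<mu>} - {..<min \<mu> r}. (\<Sum>s<\<nu>. ?f s u) = 0"
    proof (intro ballI sum.neutral)
      fix u s
      assume "u \<in> {..<\<mu>} - {..<min \<mu> r}"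
      then have "b < u"
        using b by auto
      then show "?f s u = 0"
        by (simp add: right_factor_def monomial_deriv_eq_0)
    qed
  qed auto
  also have "\<dots> = (\<Sum>u<min \<mu> r. \<Sum>s<min \<nu> q. ?f s u)"
  proof (rule sum.cong[OF refl], rule sum.mono_neutral_right)
    fix u
    show "\<forall>s\<in>{..<\<nu>} - {..<min \<nu> q}. ?f s u = 0"
    proof
      fix s
      assume "s \<in> {..<\<nu>} - {..<min \<nu> q}"
      then have "a < s"
        using a by auto
      then show "?f s u = 0"
        by (simp add: left_factor_def monomial_deriv_eq_0)
    qed
  qed auto
  finally show ?thesis
    by (simp add: sum.swap[of _ "{..<min \<nu> q}"])
qed

lemma sum_lessThan_mult:
  fixes m q :: nat
  shows "(\<Sum>x<m * q. f x) = (\<Sum>p<m. \<Sum>c<q. f (p * q + c))"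
proof (induction m)
  case (Suc m)
  have "(\<Sum>x<Suc m * q. f x) = (\<Sum>x<m * q. f x) + (\<Sum>x\<in>{m * q..<m * q + q}. f x)"
    using sum.atLeastLessThan_concat[of 0 "m * q" "m * q + q" f]
    by (simp add: lessThan_atLeast0 add.commute)
  also have "(\<Sum>x\<in>{m * q..<m * q + q}. f x) = (\<Sum>c<q. f (m * q + c))"
    using sum.shift_bounds_nat_ivl[of f 0 "m * q" q] by (simp add: lessThan_atLeast0 add.commute)
  finally show ?case
    using Suc by simp
qed simp

lemma block_index_less:
  fixes p c q M :: nat
  assumes "c < q" "p < M"
  shows "p * q + c < M * q"
proof -
  have "p * q + c < Suc p * q"
    using assms by simp
  also have "\<dots> \<le> M * q"
    using assms by (intro mult_le_mono1) simp
  finally show ?thesis .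
qed

lemma rank_sum_outer_products_le:
  fixes F G :: "nat \<Rightarrow> nat \<Rightarrow> 'a::field"
  shows "vec_space.rank n (mat n nc (\<lambda>(k, l). \<Sum>t<N. F t k * G t l)) \<le> N"
proof (induction N)
  case 0
  have "mat n nc (\<lambda>(k, l). \<Sum>t<0. F t k * G t l) = 0\<^sub>m n nc"
    by (rule eq_matI) auto
  then show ?case
    by (simp only: vec_space.rank_0I)
next
  case (Suc N)
  have split: "mat n nc (\<lambda>(k, l). \<Sum>t<Suc N. F t k * G t l)
      = mat n nc (\<lambda>(k, l). \<Sum>t<N. F t k * G t l) + mat n nc (\<lambda>(k, l). F N k * G N l)"
    by (rule eq_matI) auto
  have "vec_space.rank n (mat n nc (\<lambda>(k, l). \<Sum>t<Suc N. F t k * G t l))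
      \<le> vec_space.rank n (mat n nc (\<lambda>(k, l). \<Sum>t<N. F t k * G t l))
        + vec_space.rank n (mat n nc (\<lambda>(k, l). F N k * G N l))"
    unfolding split by (rule vec_space.rank_subadditive) auto
  moreover have "vec_space.rank n (mat n nc (\<lambda>(k, l). F N k * G N l)) \<le> 1"
    by (rule vec_space.rank_le_1_product_entries[of _ n nc "F N" "G N"]) auto
  ultimately show ?case
    using Suc by simp
qed

lemma det_nonzero_if_pivots:
  fixes M :: "'a::field mat" and \<rho> :: "nat \<Rightarrow> nat"
  assumes M: "M \<in> carrier_mat n n"
    and pivot: "\<And>l. l < n \<Longrightarrow> \<psi> l < n \<and> M $$ (\<psi> l, l) \<noteq> 0
                  \<and> (\<forall>l'<n. M $$ (\<psi> l, l') \<noteq> 0 \<longrightarrow> l' = l \<or> \<rho> l' < \<rho> l)"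
  shows "det M \<noteq> 0"
proof
  assume "det M = 0"
  then obtain v where v: "v \<in> carrier_vec n" "v \<noteq> 0\<^sub>v n" and Mv: "M *\<^sub>v v = 0\<^sub>v n"
    using det_0_iff_vec_prod_zero[OF M] by auto
  have "l < n \<longrightarrow> v $ l = 0" for l
  proof (induction l rule: measure_induct_rule[of \<rho>])
    case (less l)
    show ?case
    proof
      assume l: "l < n"
      note p = pivot[OF l]
      have others: "(\<Sum>l'\<in>{0..<n} - {l}. M $$ (\<psi> l, l') * v $ l') = 0"
      proof (intro sum.neutral ballI)
        fix l' assume "l' \<in> {0..<n} - {l}"
        then show "M $$ (\<psi> l, l') * v $ l' = 0"
          using p less by (cases "M $$ (\<psi> l, l') = 0") auto
      qed
      have "0 = (M *\<^sub>v v) $ \<psi> l"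
        using Mv p by simp
      also have "\<dots> = (\<Sum>l'\<in>{0..<n}. M $$ (\<psi> l, l') * v $ l')"
        using M v p by (simp add: scalar_prod_def)
      also have "\<dots> = M $$ (\<psi> l, l) * v $ l"
        using l others by (subst sum.remove[of _ l]) auto
      finally show "v $ l = 0"
        using p by simp
    qed
  qed
  then show False
    using v by (auto intro: eq_vecI)
qed

lemma pick_image_strict_mono_on:
  fixes g :: "nat \<Rightarrow> nat"
  assumes mono: "strict_mono_on {..<n} g" and t: "t < n"
  shows "pick (g ` {..<n}) t = g t"
proof -
  have "{x \<in> g ` {..<n}. x < g t} = g ` {..<t}"
  proof safe
    fix x assume "x < n" "g x < g t"
    then show "g x \<in> g ` {..<t}"
      using mono t by (metis image_eqI lessThan_iff linorder_neqE_nat order_less_asym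
          strict_mono_onD)
  next
    fix x assume "x < t"
    then show "g x \<in> g ` {..<n}" "g x < g t"
      using mono t by (auto intro: strict_mono_onD)
  qed
  moreover have "inj_on g {..<t}"
    by (rule inj_on_subset[OF strict_mono_on_imp_inj_on[OF mono]]) (use t in auto)
  ultimately have "card {x \<in> g ` {..<n}. x < g t} = t"
    by (simp add: card_image)
  then show ?thesis
    using pick_card_in_set[of "g t" "g ` {..<n}"] t by simp
qed

lemma submatrix_image_strict_mono_on:
  fixes A :: "'a mat"
  assumes g: "strict_mono_on {..<m} g" "g ` {..<m} \<subseteq> {..<dim_row A}"
    and h: "strict_mono_on {..<n} h" "h ` {..<n} \<subseteq> {..<dim_col A}"
  shows "submatrix A (g ` {..<m}) (h ` {..<n}) = mat m n (\<lambda>(i, j). A $$ (g i, h j))"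
proof -
  have "{i. i < dim_row A \<and> i \<in> g ` {..<m}} = g ` {..<m}"
    using g(2) by auto
  then have rows: "card {i. i < dim_row A \<and> i \<in> g ` {..<m}} = m"
    using g(1) by (simp add: card_image strict_mono_on_imp_inj_on)
  have "{j. j < dim_col A \<and> j \<in> h ` {..<n}} = h ` {..<n}"
    using h(2) by auto
  then have cols: "card {j. j < dim_col A \<and> j \<in> h ` {..<n}} = n"
    using h(1) by (simp add: card_image strict_mono_on_imp_inj_on)
  show ?thesis
    by (rule eq_matI) (simp_all add: dim_submatrix rows cols submatrix_index
        pick_image_strict_mono_on[OF g(1)] pick_image_strict_mono_on[OF h(1)])
qed

definition grid_embed :: "nat \<Rightarrow> nat \<Rightarrow> nat \<Rightarrow> nat" where
  "grid_embed m q t = t div m * q + t mod m"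

lemma strict_mono_grid_embed:
  assumes "0 < m" "m \<le> q"
  shows "strict_mono (grid_embed m q)"
proof
  fix t t' :: nat
  assume "t < t'"
  show "grid_embed m q t < grid_embed m q t'"
  proof (cases "t div m = t' div m")
    case True
    then have "t mod m < t' mod m"
      using \<open>t < t'\<close> by (metis add_less_cancel_left div_mult_mod_eq)
    then show ?thesis
      using True by (simp add: grid_embed_def)
  next
    case False
    then have "t div m < t' div m"
      using \<open>t < t'\<close> div_le_mono le_neq_implies_less less_imp_le by blast
    moreover have "t mod m < q"
      using assms by (meson mod_less_divisor order_less_le_trans)
    ultimately show ?thesis
      unfolding grid_embed_def by (metis add.commute block_index_less trans_less_add2)
  qed
qed

lemma grid_embed_less:
  assumes "0 < m" "m \<le> q" "t div m < M"
  shows "grid_embed m q t < M * q"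
proof -
  have "t mod m < q"
    using assms by (meson mod_less_divisor order_less_le_trans)
  then show ?thesis
    unfolding grid_embed_def using assms(3) by (rule block_index_less)
qed

lemma grid_embed_div_mod:
  assumes "0 < m" "m \<le> q"
  shows "grid_embed m q t div q = t div m" "grid_embed m q t mod q = t mod m"
proof -
  have "t mod m < q"
    using assms by (meson mod_less_divisor order_less_le_trans)
  then show "grid_embed m q t div q = t div m" "grid_embed m q t mod q = t mod m"
    by (simp_all add: grid_embed_def)
qed

definition weighted_hankel ::
    "nat \<Rightarrow> nat \<Rightarrow> nat \<Rightarrow> nat \<Rightarrow> (nat \<Rightarrow> 'a) \<Rightarrow> (nat \<Rightarrow> 'a) \<Rightarrow> 'a \<Rightarrow> 'a::field_char_0 mat" where
  "weighted_hankel q r \<mu> \<nu> \<alpha> \<beta> z = mat (\<mu> * q) (\<nu> * r)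
     (\<lambda>(k, l). \<alpha> k * monomial_deriv (k div q + l div r) (k mod q + l mod r) z * \<beta> l)"

lemma rank_weighted_hankel_le:
  assumes "0 < q" "0 < r"
  shows "vec_space.rank (\<mu> * q) (weighted_hankel q r \<mu> \<nu> \<alpha> \<beta> z) \<le> min \<mu> r * min \<nu> q"
proof -
  define m1 m2 where "m1 = min \<mu> r" and "m2 = min \<nu> q"
  define F where "F t k = \<alpha> k * left_factor z (k div q) (k mod q) (t div m1) (t mod m1)" for t k
  define G where "G t l = right_factor z (t div m1) (t mod m1) (l div r) (l mod r) * \<beta> l" for t l
  have "weighted_hankel q r \<mu> \<nu> \<alpha> \<beta> z = mat (\<mu> * q) (\<nu> * r) (\<lambda>(k, l). \<Sum>t<m2 * m1. F t k * G t l)"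
  proof (rule eq_matI)
    fix k l
    assume "k < dim_row (mat (\<mu> * q) (\<nu> * r) (\<lambda>(k, l). \<Sum>t<m2 * m1. F t k * G t l))"
      and "l < dim_col (mat (\<mu> * q) (\<nu> * r) (\<lambda>(k, l). \<Sum>t<m2 * m1. F t k * G t l))"
    then have k: "k < \<mu> * q" and l: "l < \<nu> * r"
      by simp_all
    have "(\<Sum>t<m2 * m1. F t k * G t l) = \<alpha> k * (\<Sum>s<m2. \<Sum>u<m1.
        left_factor z (k div q) (k mod q) s u * right_factor z s u (l div r) (l mod r)) * \<beta> l"
      unfolding sum_lessThan_mult F_def G_def
      by (simp add: sum_distrib_left sum_distrib_right mult_ac)
    also have "\<dots> = \<alpha> k * monomial_deriv (k div q + l div r) (k mod q + l mod r) z * \<beta> l"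
      unfolding m1_def m2_def
      by (subst monomial_deriv_eq_sum_factors[of _ \<mu> _ q _ \<nu> _ r])
        (use k l assms in \<open>simp_all add: less_mult_imp_div_less\<close>)
    also have "\<dots> = weighted_hankel q r \<mu> \<nu> \<alpha> \<beta> z $$ (k, l)"
      using k l by (simp add: weighted_hankel_def)
    finally show "weighted_hankel q r \<mu> \<nu> \<alpha> \<beta> z $$ (k, l)
        = mat (\<mu> * q) (\<nu> * r) (\<lambda>(k, l). \<Sum>t<m2 * m1. F t k * G t l) $$ (k, l)"
      using k l by simp
  qed (simp_all add: weighted_hankel_def)
  then show ?thesis
    using rank_sum_outer_products_le[where n = "\<mu> * q" and nc = "\<nu> * r" and N = "m2 * m1"
        and F = F and G = G]
    by (simp add: m1_def m2_def mult.commute)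
qed

text \<open>The minor of \<^const>\<open>weighted_hankel\<close> on the rows \<open>(i, a)\<close> and columns \<open>(j, b)\<close> with
  \<open>i, b < m1\<close> and \<open>a, j < m2\<close> factors through the inner indices \<open>(s, u)\<close> with \<open>s < m2\<close>,
  \<open>u < m1\<close>; all three index pairs are encoded row-major as a single index below \<open>m1 * m2\<close>.\<close>

definition left_minor :: "'a \<Rightarrow> (nat \<Rightarrow> 'a) \<Rightarrow> nat \<Rightarrow> nat \<Rightarrow> 'a::comm_semiring_1 mat" where
  "left_minor z f m1 m2 = mat (m1 * m2) (m1 * m2)
     (\<lambda>(t', t). f t' * left_factor z (t' div m2) (t' mod m2) (t div m1) (t mod m1))"

definition right_minor :: "'a \<Rightarrow> (nat \<Rightarrow> 'a) \<Rightarrow> nat \<Rightarrow> nat \<Rightarrow> 'a::comm_semiring_1 mat" where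
  "right_minor z g m1 m2 = mat (m1 * m2) (m1 * m2)
     (\<lambda>(t, t'). right_factor z (t div m1) (t mod m1) (t' div m1) (t' mod m1) * g t')"

lemma det_left_minor_nonzero:
  fixes z :: "'a::field_char_0"
  assumes f: "\<And>t. f t \<noteq> 0"
  shows "det (left_minor z f m1 m2) \<noteq> 0"
proof (rule det_nonzero_if_pivots[where \<psi> = "\<lambda>l. l mod m1 * m2 + l div m1"
      and \<rho> = "\<lambda>l. l div m1 + l mod m1"])
  show "left_minor z f m1 m2 \<in> carrier_mat (m1 * m2) (m1 * m2)"
    by (simp add: left_minor_def)
  fix l
  assume l: "l < m1 * m2"
  define s u where "s = l div m1" and "u = l mod m1"
  have "0 < m1"
    using l by (cases m1) auto
  then have s: "s < m2" and u: "u < m1"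
    using l by (simp_all add: s_def u_def less_mult_imp_div_less mult.commute)
  have row: "u * m2 + s < m1 * m2"
    using s u by (rule block_index_less)
  have entry: "left_minor z f m1 m2 $$ (u * m2 + s, l') = f (u * m2 + s) * left_factor z u s (l' div m1) (l' mod m1)"
    if "l' < m1 * m2" for l'
    using row that s by (simp add: left_minor_def)
  have "left_minor z f m1 m2 $$ (u * m2 + s, l) \<noteq> 0"
    using entry[OF l] f by (simp add: left_factor_def monomial_deriv_self s_def u_def)
  moreover have "l' = l \<or> l' div m1 + l' mod m1 < l div m1 + l mod m1"
    if l': "l' < m1 * m2" "left_minor z f m1 m2 $$ (u * m2 + s, l') \<noteq> 0" for l'
  proof -
    have "left_factor z u s (l' div m1) (l' mod m1) \<noteq> 0"
      using l' entry by auto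
    then have "l' mod m1 \<le> u" "l' div m1 + (u - l' mod m1) \<le> s"
      unfolding left_factor_def by (auto split: if_splits dest!: monomial_deriv_nonzero_imp_le)
    then have "l' div m1 + l' mod m1 < s + u \<or> (l' div m1 = s \<and> l' mod m1 = u)"
      by arith
    then show ?thesis
      unfolding s_def u_def by (metis div_mult_mod_eq)
  qed
  ultimately show "l mod m1 * m2 + l div m1 < m1 * m2
      \<and> left_minor z f m1 m2 $$ (l mod m1 * m2 + l div m1, l) \<noteq> 0
      \<and> (\<forall>l'<m1 * m2. left_minor z f m1 m2 $$ (l mod m1 * m2 + l div m1, l') \<noteq> 0
           \<longrightarrow> l' = l \<or> l' div m1 + l' mod m1 < l div m1 + l mod m1)"
    using row by (simp add: s_def u_def)
qed

lemma det_right_minor_nonzero: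
  fixes z :: "'a::field_char_0"
  assumes g: "\<And>t. g t \<noteq> 0"
  shows "det (right_minor z g m1 m2) \<noteq> 0"
proof (rule det_nonzero_if_pivots[where \<psi> = "\<lambda>l. l"
      and \<rho> = "\<lambda>l. m1 + m2 - (l div m1 + l mod m1)"])
  show "right_minor z g m1 m2 \<in> carrier_mat (m1 * m2) (m1 * m2)"
    by (simp add: right_minor_def)
  fix l
  assume l: "l < m1 * m2"
  define s u where "s = l div m1" and "u = l mod m1"
  have "right_minor z g m1 m2 $$ (l, l) \<noteq> 0"
    using l g by (simp add: right_minor_def right_factor_def monomial_deriv_self)
  moreover have "l' = l \<or> m1 + m2 - (l' div m1 + l' mod m1) < m1 + m2 - (s + u)"
    if l': "l' < m1 * m2" "right_minor z g m1 m2 $$ (l, l') \<noteq> 0" for l'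
  proof -
    have "right_factor z s u (l' div m1) (l' mod m1) \<noteq> 0"
      using l l' by (auto simp: right_minor_def s_def u_def)
    then have "s \<le> l' div m1" "u + (l' div m1 - s) \<le> l' mod m1"
      unfolding right_factor_def by (auto split: if_splits dest!: monomial_deriv_nonzero_imp_le)
    moreover have "0 < m1"
      using l by (cases m1) auto
    then have "l' div m1 < m2" "l' mod m1 < m1"
      using l' by (simp_all add: less_mult_imp_div_less mult.commute)
    ultimately have "s + u < l' div m1 + l' mod m1 \<and> l' div m1 + l' mod m1 \<le> m1 + m2
        \<or> (l' div m1 = s \<and> l' mod m1 = u)"
      by arith
    then show ?thesis
      unfolding s_def u_def by (metis diff_less_mono2 div_mult_mod_eq order.strict_trans2)
  qed
  ultimately show "l < m1 * m2 \<and> right_minor z g m1 m2 $$ (l, l) \<noteq> 0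
      \<and> (\<forall>l'<m1 * m2. right_minor z g m1 m2 $$ (l, l') \<noteq> 0
           \<longrightarrow> l' = l \<or> m1 + m2 - (l' div m1 + l' mod m1) < m1 + m2 - (l div m1 + l mod m1))"
    using l by (simp add: s_def u_def)
qed

lemma index_left_minor_mult_right_minor:
  assumes "t1 < m1 * m2" "t2 < m1 * m2"
  shows "(left_minor z f m1 m2 * right_minor z g m1 m2) $$ (t1, t2)
    = f t1 * (\<Sum>s<m2. \<Sum>u<m1. left_factor z (t1 div m2) (t1 mod m2) s u
                               * right_factor z s u (t2 div m1) (t2 mod m1)) * g t2"
    (is "(?L * ?R) $$ _ = _")
proof -
  have "?L $$ (t1, s * m1 + u) * ?R $$ (s * m1 + u, t2)
      = f t1 * (left_factor z (t1 div m2) (t1 mod m2) s u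
                * right_factor z s u (t2 div m1) (t2 mod m1)) * g t2"
    if "s < m2" "u < m1" for s u
  proof -
    have "s * m1 + u < m1 * m2"
      using block_index_less[OF that(2,1)] by (simp add: mult.commute)
    then show ?thesis
      using that assms by (simp add: left_minor_def right_minor_def mult_ac)
  qed
  moreover have "(?L * ?R) $$ (t1, t2) = (\<Sum>t<m2 * m1. ?L $$ (t1, t) * ?R $$ (t, t2))"
    using assms by (auto simp: left_minor_def right_minor_def scalar_prod_def mult.commute
        lessThan_atLeast0 intro!: sum.cong)
  ultimately show ?thesis
    unfolding sum_lessThan_mult by (simp add: sum_distrib_left sum_distrib_right)
qed

lemma submatrix_weighted_hankel:
  assumes m1: "0 < m1" "m1 \<le> \<mu>" "m1 \<le> r" and m2: "0 < m2" "m2 \<le> \<nu>" "m2 \<le> q"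
  shows "submatrix (weighted_hankel q r \<mu> \<nu> \<alpha> \<beta> z)
      (grid_embed m2 q ` {..<m1 * m2}) (grid_embed m1 r ` {..<m1 * m2})
    = left_minor z (\<alpha> \<circ> grid_embed m2 q) m1 m2 * right_minor z (\<beta> \<circ> grid_embed m1 r) m1 m2"
    (is "submatrix ?H (?g ` _) (?h ` _) = ?L * ?R")
proof -
  let ?N = "m1 * m2"
  have row_less: "?g t < \<mu> * q" if "t < ?N" for t
  proof -
    have "t div m2 < m1"
      using that by (simp add: less_mult_imp_div_less)
    then show ?thesis
      using m1 m2 by (intro grid_embed_less) simp_all
  qed
  have col_less: "?h t < \<nu> * r" if "t < ?N" for t
  proof -
    have "t div m1 < m2"
      using that by (simp add: less_mult_imp_div_less mult.commute)
    then show ?thesis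
      using m1 m2 by (intro grid_embed_less) simp_all
  qed
  have "submatrix ?H (?g ` {..<?N}) (?h ` {..<?N}) = mat ?N ?N (\<lambda>(t1, t2). ?H $$ (?g t1, ?h t2))"
  proof (rule submatrix_image_strict_mono_on)
    show "strict_mono_on {..<?N} ?g" "strict_mono_on {..<?N} ?h"
      using strict_mono_grid_embed[OF m2(1,3)] strict_mono_grid_embed[OF m1(1,3)]
      by (auto intro!: strict_mono_onI dest: strict_monoD)
  qed (auto simp: weighted_hankel_def row_less col_less)
  also have "\<dots> = ?L * ?R"
  proof (rule eq_matI)
    fix t1 t2
    assume "t1 < dim_row (?L * ?R)" "t2 < dim_col (?L * ?R)"
    then have t1: "t1 < ?N" and t2: "t2 < ?N"
      by (simp_all add: left_minor_def right_minor_def)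
    have "?H $$ (?g t1, ?h t2)
        = \<alpha> (?g t1) * monomial_deriv (t1 div m2 + t2 div m1) (t1 mod m2 + t2 mod m1) z * \<beta> (?h t2)"
      using row_less[OF t1] col_less[OF t2] m1 m2 by (simp add: weighted_hankel_def grid_embed_div_mod)
    also have "\<dots> = \<alpha> (?g t1) * (\<Sum>s<m2. \<Sum>u<m1. left_factor z (t1 div m2) (t1 mod m2) s u
        * right_factor z s u (t2 div m1) (t2 mod m1)) * \<beta> (?h t2)"
      using t1 t2 m1 m2
      by (subst monomial_deriv_eq_sum_factors[of _ m1 _ m2 _ m2 _ m1])
        (simp_all add: less_mult_imp_div_less mult.commute)
    also have "\<dots> = (?L * ?R) $$ (t1, t2)"
      using t1 t2 by (simp add: index_left_minor_mult_right_minor)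
    finally show "mat ?N ?N (\<lambda>(t1, t2). ?H $$ (?g t1, ?h t2)) $$ (t1, t2) = (?L * ?R) $$ (t1, t2)"
      using t1 t2 by simp
  qed (simp_all add: left_minor_def right_minor_def)
  finally show ?thesis .
qed

lemma rank_weighted_hankel_ge:
  assumes "0 < m1" "m1 \<le> \<mu>" "m1 \<le> r" "0 < m2" "m2 \<le> \<nu>" "m2 \<le> q"
    and "\<And>k. \<alpha> k \<noteq> 0" "\<And>l. \<beta> l \<noteq> 0"
  shows "m1 * m2 \<le> vec_space.rank (\<mu> * q) (weighted_hankel q r \<mu> \<nu> \<alpha> \<beta> z)"
proof -
  let ?H = "weighted_hankel q r \<mu> \<nu> \<alpha> \<beta> z"
  let ?M = "submatrix ?H (grid_embed m2 q ` {..<m1 * m2}) (grid_embed m1 r ` {..<m1 * m2})"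
  have "det (left_minor z (\<alpha> \<circ> grid_embed m2 q) m1 m2) \<noteq> 0"
    by (rule det_left_minor_nonzero) (simp add: assms(7))
  moreover have "det (right_minor z (\<beta> \<circ> grid_embed m1 r) m1 m2) \<noteq> 0"
    by (rule det_right_minor_nonzero) (simp add: assms(8))
  ultimately have "det ?M \<noteq> 0"
    unfolding submatrix_weighted_hankel[OF assms(1-6)]
    by (subst det_mult[where n = "m1 * m2"]) (simp_all add: left_minor_def right_minor_def)
  then have "card {j. j < \<nu> * r \<and> j \<in> grid_embed m1 r ` {..<m1 * m2}} \<le> vec_space.rank (\<mu> * q) ?H"
    by (intro vec_space.rank_gt_minor[where nc = "\<nu> * r"]) (simp add: weighted_hankel_def)
  moreover have "card {j. j < \<nu> * r \<and> j \<in> grid_embed m1 r ` {..<m1 * m2}} = m1 * m2"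
    using arg_cong[OF submatrix_weighted_hankel[OF assms(1-6)], of dim_col]
    by (simp add: dim_submatrix weighted_hankel_def right_minor_def)
  ultimately show ?thesis
    by simp
qed

lemma rank_weighted_hankel:
  assumes "0 < q" "0 < r" "0 < \<mu>" "0 < \<nu>" "\<And>k. \<alpha> k \<noteq> 0" "\<And>l. \<beta> l \<noteq> 0"
  shows "vec_space.rank (\<mu> * q) (weighted_hankel q r \<mu> \<nu> \<alpha> \<beta> z) = min \<mu> r * min \<nu> q"
proof (rule antisym)
  show "vec_space.rank (\<mu> * q) (weighted_hankel q r \<mu> \<nu> \<alpha> \<beta> z) \<le> min \<mu> r * min \<nu> q"
    by (rule rank_weighted_hankel_le) (use assms in auto)
  show "min \<mu> r * min \<nu> q \<le> vec_space.rank (\<mu> * q) (weighted_hankel q r \<mu> \<nu> \<alpha> \<beta> z)"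
    by (rule rank_weighted_hankel_ge) (use assms in auto)
qed

lemma kron_one_mult_hankel_blocks:
  fixes U :: "'a::comm_semiring_1 mat"
  assumes U: "U \<in> carrier_mat q q" and F: "\<And>k. F k \<in> carrier_mat q r"
  shows "kron (1\<^sub>m \<mu>) U * hankel_blocks q r \<mu> \<nu> F = hankel_blocks q r \<mu> \<nu> (\<lambda>k. U * F k)"
proof (rule eq_matI)
  fix k l
  assume "k < dim_row (hankel_blocks q r \<mu> \<nu> (\<lambda>k. U * F k))"
    and "l < dim_col (hankel_blocks q r \<mu> \<nu> (\<lambda>k. U * F k))"
  then have k: "k < \<mu> * q" and l: "l < \<nu> * r"
    by (simp_all add: hankel_blocks_def)
  then have q: "0 < q" and r: "0 < r"
    by (cases q; cases r; simp)+
  have i: "k div q < \<mu>" and b: "l mod r < r"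
    using k r by (simp_all add: less_mult_imp_div_less)
  have kron_entry: "kron (1\<^sub>m \<mu>) U $$ (k, p * q + c) = (if p = k div q then U $$ (k mod q, c) else 0)"
    if "p < \<mu>" "c < q" for p c
    using U k i that block_index_less[OF that(2,1)] by (simp add: kron_def)
  have "(kron (1\<^sub>m \<mu>) U * hankel_blocks q r \<mu> \<nu> F) $$ (k, l)
      = (\<Sum>x<\<mu> * q. kron (1\<^sub>m \<mu>) U $$ (k, x) * hankel_blocks q r \<mu> \<nu> F $$ (x, l))"
    using U k l by (simp add: kron_def hankel_blocks_def scalar_prod_def lessThan_atLeast0)
  also have "\<dots> = (\<Sum>p<\<mu>. \<Sum>c<q. kron (1\<^sub>m \<mu>) U $$ (k, p * q + c)
                                  * hankel_blocks q r \<mu> \<nu> F $$ (p * q + c, l))"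
    by (rule sum_lessThan_mult)
  also have "\<dots> = (\<Sum>p<\<mu>. if p = k div q then
      (\<Sum>c<q. U $$ (k mod q, c) * F (p + l div r) $$ (c, l mod r)) else 0)"
    using l by (intro sum.cong refl) (simp add: kron_entry block_index_less hankel_blocks_def)
  also have "\<dots> = (\<Sum>c<q. U $$ (k mod q, c) * F (k div q + l div r) $$ (c, l mod r))"
    using i by simp
  also have "\<dots> = hankel_blocks q r \<mu> \<nu> (\<lambda>k. U * F k) $$ (k, l)"
    using U F[of "k div q + l div r"] k l q b
    by (simp add: hankel_blocks_def scalar_prod_def lessThan_atLeast0 carrier_matD)
  finally show "(kron (1\<^sub>m \<mu>) U * hankel_blocks q r \<mu> \<nu> F) $$ (k, l)
      = hankel_blocks q r \<mu> \<nu> (\<lambda>k. U * F k) $$ (k, l)" .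
qed (use U in \<open>simp_all add: kron_def hankel_blocks_def\<close>)

lemma hankel_blocks_mult_kron_one:
  fixes W :: "'a::comm_semiring_1 mat"
  assumes W: "W \<in> carrier_mat r r" and F: "\<And>k. F k \<in> carrier_mat q r"
  shows "hankel_blocks q r \<mu> \<nu> F * kron (1\<^sub>m \<nu>) W = hankel_blocks q r \<mu> \<nu> (\<lambda>k. F k * W)"
proof (rule eq_matI)
  fix k l
  assume "k < dim_row (hankel_blocks q r \<mu> \<nu> (\<lambda>k. F k * W))"
    and "l < dim_col (hankel_blocks q r \<mu> \<nu> (\<lambda>k. F k * W))"
  then have k: "k < \<mu> * q" and l: "l < \<nu> * r"
    by (simp_all add: hankel_blocks_def)
  then have q: "0 < q" and r: "0 < r"
    by (cases q; cases r; simp)+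
  have j: "l div r < \<nu>" and a: "k mod q < q"
    using l q by (simp_all add: less_mult_imp_div_less)
  have kron_entry: "kron (1\<^sub>m \<nu>) W $$ (p * r + d, l) = (if p = l div r then W $$ (d, l mod r) else 0)"
    if "p < \<nu>" "d < r" for p d
    using W l j that block_index_less[OF that(2,1)] by (simp add: kron_def)
  have "(hankel_blocks q r \<mu> \<nu> F * kron (1\<^sub>m \<nu>) W) $$ (k, l)
      = (\<Sum>x<\<nu> * r. hankel_blocks q r \<mu> \<nu> F $$ (k, x) * kron (1\<^sub>m \<nu>) W $$ (x, l))"
    using W k l by (simp add: kron_def hankel_blocks_def scalar_prod_def lessThan_atLeast0)
  also have "\<dots> = (\<Sum>p<\<nu>. \<Sum>d<r. hankel_blocks q r \<mu> \<nu> F $$ (k, p * r + d)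
                                  * kron (1\<^sub>m \<nu>) W $$ (p * r + d, l))"
    by (rule sum_lessThan_mult)
  also have "\<dots> = (\<Sum>p<\<nu>. if p = l div r then
      (\<Sum>d<r. F (k div q + p) $$ (k mod q, d) * W $$ (d, l mod r)) else 0)"
    using k by (intro sum.cong refl) (simp add: kron_entry block_index_less hankel_blocks_def)
  also have "\<dots> = (\<Sum>d<r. F (k div q + l div r) $$ (k mod q, d) * W $$ (d, l mod r))"
    using j by simp
  also have "\<dots> = hankel_blocks q r \<mu> \<nu> (\<lambda>k. F k * W) $$ (k, l)"
    using W F[of "k div q + l div r"] k l r a
    by (simp add: hankel_blocks_def scalar_prod_def lessThan_atLeast0 carrier_matD)
  finally show "(hankel_blocks q r \<mu> \<nu> F * kron (1\<^sub>m \<nu>) W) $$ (k, l)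
      = hankel_blocks q r \<mu> \<nu> (\<lambda>k. F k * W) $$ (k, l)" .
qed (use W in \<open>simp_all add: kron_def hankel_blocks_def\<close>)

lemma map_mat_hankel_blocks:
  assumes "\<And>k. F k \<in> carrier_mat q r"
  shows "map_mat f (hankel_blocks q r \<mu> \<nu> F) = hankel_blocks q r \<mu> \<nu> (\<lambda>k. map_mat f (F k))"
proof (rule eq_matI)
  fix k l
  assume "k < dim_row (hankel_blocks q r \<mu> \<nu> (\<lambda>k. map_mat f (F k)))"
    and "l < dim_col (hankel_blocks q r \<mu> \<nu> (\<lambda>k. map_mat f (F k)))"
  then have k: "k < \<mu> * q" and l: "l < \<nu> * r"
    by (simp_all add: hankel_blocks_def)
  then have "0 < q" "0 < r"
    by (cases q; cases r; simp)+
  then show "map_mat f (hankel_blocks q r \<mu> \<nu> F) $$ (k, l)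
      = hankel_blocks q r \<mu> \<nu> (\<lambda>k. map_mat f (F k)) $$ (k, l)"
    using assms[of "k div q + l div r"] k l by (simp add: hankel_blocks_def)
qed (simp_all add: hankel_blocks_def)

lemma monomial_deriv_mult_truncated:
  fixes z :: "'a::comm_semiring_1"
  assumes a: "a < q" and b: "b < r"
  shows "(\<Sum>c<q. \<Sum>d<r. (if c + d = K then of_nat (K choose c) else 0)
                          * monomial_deriv c a z * monomial_deriv d b z)
       = monomial_deriv K (a + b) z"
proof -
  define T where "T c = of_nat (K choose c) * monomial_deriv c a z * monomial_deriv (K - c) b z" for c
  have inner: "(\<Sum>d<r. (if c + d = K then of_nat (K choose c) else 0)
                       * monomial_deriv c a z * monomial_deriv d b z)
      = (if c \<le> K then T c else 0)" for c
  proof -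
    have "(\<Sum>d<r. (if c + d = K then of_nat (K choose c) else 0)
                 * monomial_deriv c a z * monomial_deriv d b z)
        = (\<Sum>d<r. if d = K - c then (if c \<le> K then T c else 0) else 0)"
      by (intro sum.cong refl) (auto simp: T_def)
    also have "\<dots> = (if c \<le> K then T c else 0)"
    proof (cases "K - c < r")
      case False
      then have "monomial_deriv (K - c) b z = 0"
        using b by (intro monomial_deriv_eq_0) simp
      then show ?thesis
        by (simp add: T_def)
    qed simp
    finally show ?thesis .
  qed
  have "(\<Sum>c<q. if c \<le> K then T c else 0) = (\<Sum>c\<le>K. T c)"
  proof -
    have "T c = 0" if "q \<le> c" for c
      using that a by (simp add: T_def monomial_deriv_eq_0)
    then have "(\<Sum>c<q. if c \<le> K then T c else 0) = (\<Sum>c<max q (Suc K). if c \<le> K then T c else 0)"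
      by (intro sum.mono_neutral_left) auto
    also have "\<dots> = (\<Sum>c\<le>K. T c)"
      by (rule sum.mono_neutral_cong_right) auto
    finally show ?thesis .
  qed
  then show ?thesis
    by (simp add: inner T_def monomial_deriv_mult)
qed

lemma Mder_eq_Uq_Ak_Wr:
  "Mder q r K z = Uq q z * map_mat complex_of_real (Ak q r K) * Wr r z"
proof (rule eq_matI)
  fix a b
  assume "a < dim_row (Uq q z * map_mat complex_of_real (Ak q r K) * Wr r z)"
    and "b < dim_col (Uq q z * map_mat complex_of_real (Ak q r K) * Wr r z)"
  then have a: "a < q" and b: "b < r"
    by (simp_all add: Uq_def Wr_def)
  have of_real_if: "complex_of_real (if P then real n else 0) = (if P then of_nat n else 0)" for P n
    by simp
  have "(Uq q z * map_mat complex_of_real (Ak q r K) * Wr r z) $$ (a, b)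
      = (\<Sum>d<r. (\<Sum>c<q. monomial_deriv c a z * (if c + d = K then of_nat (K choose c) else 0))
                 * monomial_deriv d b z)"
    using a b by (simp add: Uq_def Wr_def Ak_def scalar_prod_def lessThan_atLeast0 dmon_eq_monomial_deriv
        of_real_if)
  also have "\<dots> = monomial_deriv K (a + b) z"
    unfolding monomial_deriv_mult_truncated[OF a b, symmetric] sum_distrib_right
    by (subst sum.swap) (simp add: mult_ac)
  finally show "Mder q r K z $$ (a, b) = (Uq q z * map_mat complex_of_real (Ak q r K) * Wr r z) $$ (a, b)"
    using a b by (simp add: Mder_def dmon_eq_monomial_deriv)
qed (simp_all add: Mder_def Uq_def Wr_def)

lemma MM_factorization:
  "MM q r \<mu> \<nu> z
    = kron (1\<^sub>m \<mu>) (Uq q z) * map_mat complex_of_real (AA q r \<mu> \<nu>) * kron (1\<^sub>m \<nu>) (Wr r z)"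
proof -
  have carriers: "Uq q z \<in> carrier_mat q q" "Wr r z \<in> carrier_mat r r"
    "\<And>k. Ak q r k \<in> carrier_mat q r" "\<And>k. map_mat complex_of_real (Ak q r k) \<in> carrier_mat q r"
    by (simp_all add: Uq_def Wr_def Ak_def)
  then have "\<And>k. Uq q z * map_mat complex_of_real (Ak q r k) \<in> carrier_mat q r"
    by auto
  with carriers show ?thesis
    by (simp add: MM_def AA_def map_mat_hankel_blocks kron_one_mult_hankel_blocks
        hankel_blocks_mult_kron_one Mder_eq_Uq_Ak_Wr)
qed

lemma AA_eq_weighted_hankel:
  assumes "0 < q" "0 < r"
  shows "AA q r \<mu> \<nu> = weighted_hankel q r \<mu> \<nu> (\<lambda>k. 1 / fact (k mod q)) (\<lambda>l. 1 / fact (l mod r)) 0"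
proof (rule eq_matI)
  fix k l
  assume "k < dim_row (weighted_hankel q r \<mu> \<nu> (\<lambda>k. 1 / fact (k mod q)) (\<lambda>l. 1 / fact (l mod r)) 0)"
    and "l < dim_col (weighted_hankel q r \<mu> \<nu> (\<lambda>k. 1 / fact (k mod q)) (\<lambda>l. 1 / fact (l mod r)) 0)"
  then have k: "k < \<mu> * q" and l: "l < \<nu> * r"
    by (simp_all add: weighted_hankel_def)
  define K a b where "K = k div q + l div r" and "a = k mod q" and "b = l mod r"
  have "AA q r \<mu> \<nu> $$ (k, l) = (if a + b = K then real (K choose a) else 0)"
    using k l assms by (simp add: AA_def Ak_def hankel_blocks_def K_def a_def b_def)
  moreover have "weighted_hankel q r \<mu> \<nu> (\<lambda>k. 1 / fact (k mod q)) (\<lambda>l. 1 / fact (l mod r)) 0 $$ (k, l)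
      = 1 / fact a * monomial_deriv K (a + b) (0::real) * (1 / fact b)"
    using k l by (simp add: weighted_hankel_def K_def a_def b_def)
  moreover have "(if a + b = K then real (K choose a) else 0)
      = 1 / fact a * monomial_deriv K (a + b) (0::real) * (1 / fact b)"
  proof (cases "a + b = K")
    case True
    then have "K - a = b" "a \<le> K"
      by auto
    then have "real (K choose a) = fact K / (fact a * fact b)"
      using binomial_fact[of a K] by simp
    then show ?thesis
      using True by (simp add: monomial_deriv_def)
  qed (auto simp: monomial_deriv_def)
  ultimately show "AA q r \<mu> \<nu> $$ (k, l)
      = weighted_hankel q r \<mu> \<nu> (\<lambda>k. 1 / fact (k mod q)) (\<lambda>l. 1 / fact (l mod r)) 0 $$ (k, l)"
    by simp
qed (simp_all add: AA_def hankel_blocks_def weighted_hankel_def)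

lemma MM_eq_weighted_hankel:
  assumes "0 < q" "0 < r"
  shows "MM q r \<mu> \<nu> z = weighted_hankel q r \<mu> \<nu> (\<lambda>_. 1) (\<lambda>_. 1) z"
  using assms by (intro eq_matI)
    (simp_all add: MM_def hankel_blocks_def Mder_def weighted_hankel_def dmon_eq_monomial_deriv)

theorem proposition3p1:
  fixes q r \<mu> \<nu> :: nat
  assumes "q > 0" and "r > 0" and "\<mu> > 0" and "\<nu> > 0"
  shows "(\<forall>z::complex. MM q r \<mu> \<nu> z =
             kron (1\<^sub>m \<mu>) (Uq q z) * map_mat complex_of_real (AA q r \<mu> \<nu>) * kron (1\<^sub>m \<nu>) (Wr r z))
       \<and> (\<forall>z::complex. vec_space.rank (\<mu> * q) (MM q r \<mu> \<nu> z) = vec_space.rank (\<mu> * q) (AA q r \<mu> \<nu>))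
       \<and> vec_space.rank (\<mu> * q) (AA q r \<mu> \<nu>) = min \<mu> r * min \<nu> q"
proof -
  have rank_AA: "vec_space.rank (\<mu> * q) (AA q r \<mu> \<nu>) = min \<mu> r * min \<nu> q"
    unfolding AA_eq_weighted_hankel[OF assms(1,2)] by (rule rank_weighted_hankel) (use assms in auto)
  have rank_MM: "vec_space.rank (\<mu> * q) (MM q r \<mu> \<nu> z) = min \<mu> r * min \<nu> q" for z
    unfolding MM_eq_weighted_hankel[OF assms(1,2)] by (rule rank_weighted_hankel) (use assms in auto)
  show ?thesis
    using MM_factorization rank_AA rank_MM by simp
qed

end
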